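(* Let $\mathbf G_n$ be distributed either as the Poisson random factor graph $\mathbf G_n(d,\Omega,k,\Psi,\rho)$ or as the percolated regular factor graph $\mathbf G^\varepsilon_{n,\mathrm{reg}}(d,\Omega,k,\Psi,\rho)$ (for a fixed $\varepsilon>0$). If $$\lim_{\ell\to\infty}\limsup_{n\to\infty}\frac1n\sum_{i=1}^n\sum_{\sigma\in\Omega^n}\mathbb E\Big[\mu_{\mathbf G_n}(\sigma)\left\|\mu_{\mathbf G_n,x_i}-\mu_{\mathbf G_n,x_i}[\,\cdot\,|\nabla_\ell(\mathbf G_n,x_i,\sigma)]\right\|_{TV}\Big]=0,$$ then $$\lim_{n\to\infty}\frac1{n^2}\sum_{i,j=1}^n\mathbb E\left\|\mu_{\mathbf G_n,x_i,x_j}-\mu_{\mathbf G_n,x_i}\otimes\mu_{\mathbf G_n,x_j}\right\|_{TV}=0.$$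
   Context: Factor graphs: Fix a finite set $\Omega$ of spins. A factor graph $G$ has variable nodes $V(G)$, constraint nodes $F(G)$, for each $a\in F(G)$ an ordered tuple $\partial a$ of variable nodes and a weight function $\psi_a:\Omega^{|\partial a|}\to(0,\infty)$; Gibbs measure $\mu_G(\sigma)=Z_G^{-1}\prod_a\psi_a(\sigma(\partial a))$ on $\Omega^{V(G)}$. $\mu_{G,x}$, $\mu_{G,x,y}$ are one- and two-point marginals, and $\mu_{G,x}[\cdot|E]$ the marginal of $x$ under $\mu_G$ conditioned on an event $E\subset\Omega^{V(G)}$. The bipartite graph on $V(G)\cup F(G)$ joining $a$ with the variables in $\partial a$ induces a shortest-path metric. For $x\in V(G)$, $\ell\geq1$, $\sigma\in\Omega^{V(G)}$, $\nabla_\ell(G,x,\sigma)$ is the set of $\tau\in\Omega^{V(G)}$ with $\tau(y)=\sigma(y)$ for all variable nodes $y$ at distance greater than $\ell$ from $x$. Models: $d$ fixed (a positive integer for the regular model, $d>0$ for the Poisson model), $k\geq3$, $\Psi$ a finite nonempty set of functions $\Omega^k\to(0,\infty)$, $\rho$ a distribution on $\Psi$, all fixed as $n\to\infty$. Poisson model $\mathbf G_n(d,\Omega,k,\Psi,\rho)$: variable nodes $x_1,\ldots,x_n$, $m\sim\mathrm{Po}(dn/k)$ constraint nodes, each independently with $\psi_{a_i}\sim\rho$ and $\partial a_i$ uniform in $\{x_1,\ldots,x_n\}^k$. For $\psi\in\Psi$, $J\subset[k]$ let $\psi^J((\sigma_j)_{j\in J})=|\Omega|^{|J|-k}\sum_{(\sigma_j)_{j\notin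 J}}\psi(\sigma_1,\ldots,\sigma_k)$. Percolated regular model $\mathbf G^\varepsilon_{n,\mathrm{reg}}$: (REG1) $m\sim\mathrm{Po}(dn/k)$; (REG2) independently for $i\in[m]$, $J_i\subset[k]$ includes each element with probability $1-\varepsilon$ independently, $\psi_i\sim\rho$, and $a_i$ gets weight $\psi_i^{J_i}$ and $|J_i|$ ordered neighbour slots; (REG3) if $\sum_i|J_i|>dn$ start over, otherwise choose the neighbour tuples uniformly subject to every variable node having degree at most $d$. *)

theory Defs
  imports "HOL-Probability.Probability"
begin

text \<open>Factor graphs on the variable nodes 0,...,n-1 (the paper's x_1,...,x_n). A factor graph is the list of its
  constraint nodes; each constraint node is a pair (weight function, ordered tuple of
  neighbouring variable nodes). Weight functions take the list of spins of the
  neighbours as argument.\<close>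

type_synonym 'o factor = "('o list \<Rightarrow> real) \<times> nat list"
type_synonym 'o fgraph = "'o factor list"

definition configs :: "nat \<Rightarrow> (nat \<Rightarrow> 'o::finite) set" where
  "configs n = ({..<n} \<rightarrow>\<^sub>E (UNIV :: 'o set))"

definition fg_weight :: "'o fgraph \<Rightarrow> (nat \<Rightarrow> 'o) \<Rightarrow> real" where
  "fg_weight G \<sigma> = prod_list (map (\<lambda>(\<psi>, vs). \<psi> (map \<sigma> vs)) G)"

definition partition_fn :: "nat \<Rightarrow> 'o::finite fgraph \<Rightarrow> real" where
  "partition_fn n G = (\<Sum>\<sigma>\<in>configs n. fg_weight G \<sigma>)"

definition gibbs :: "nat \<Rightarrow> 'o::finite fgraph \<Rightarrow> (nat \<Rightarrow> 'o) \<Rightarrow> real" where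
  "gibbs n G \<sigma> = (if \<sigma> \<in> configs n then fg_weight G \<sigma> / partition_fn n G else 0)"

definition marg1 :: "nat \<Rightarrow> 'o::finite fgraph \<Rightarrow> nat \<Rightarrow> 'o \<Rightarrow> real" where
  "marg1 n G x \<omega> = (\<Sum>\<sigma>\<in>{\<sigma>\<in>configs n. \<sigma> x = \<omega>}. gibbs n G \<sigma>)"

definition marg2 :: "nat \<Rightarrow> 'o::finite fgraph \<Rightarrow> nat \<Rightarrow> nat \<Rightarrow> 'o \<times> 'o \<Rightarrow> real" where
  "marg2 n G x y = (\<lambda>(\<omega>, \<omega>'). \<Sum>\<sigma>\<in>{\<sigma>\<in>configs n. \<sigma> x = \<omega> \<and> \<sigma> y = \<omega>'}. gibbs n G \<sigma>)"

definition cond_marg1 ::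
  "nat \<Rightarrow> 'o::finite fgraph \<Rightarrow> nat \<Rightarrow> (nat \<Rightarrow> 'o) set \<Rightarrow> 'o \<Rightarrow> real" where
  "cond_marg1 n G x E \<omega> =
     (\<Sum>\<sigma>\<in>{\<sigma>\<in>configs n \<inter> E. \<sigma> x = \<omega>}. gibbs n G \<sigma>) / (\<Sum>\<sigma>\<in>configs n \<inter> E. gibbs n G \<sigma>)"

definition tv_dist :: "('a::finite \<Rightarrow> real) \<Rightarrow> ('a \<Rightarrow> real) \<Rightarrow> real" where
  "tv_dist p q = (\<Sum>a\<in>UNIV. \<bar>p a - q a\<bar>) / 2"

definition fg_edges :: "'o fgraph \<Rightarrow> (nat + nat) rel" where
  "fg_edges G = {(Inl v, Inr a) | v a. a < length G \<and> v \<in> set (snd (G ! a))}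
              \<union> {(Inr a, Inl v) | v a. a < length G \<and> v \<in> set (snd (G ! a))}"

definition dist_le :: "'o fgraph \<Rightarrow> nat \<Rightarrow> nat \<Rightarrow> nat \<Rightarrow> bool" where
  "dist_le G l x y \<longleftrightarrow> (\<exists>j\<le>l. (Inl x, Inl y) \<in> (fg_edges G) ^^ j)"

definition nabla :: "nat \<Rightarrow> 'o::finite fgraph \<Rightarrow> nat \<Rightarrow> nat \<Rightarrow> (nat \<Rightarrow> 'o) \<Rightarrow> (nat \<Rightarrow> 'o) set" where
  "nabla n G l x \<sigma> = {\<tau>\<in>configs n. \<forall>y<n. \<not> dist_le G l x y \<longrightarrow> \<tau> y = \<sigma> y}"

abbreviation iid_list :: "nat \<Rightarrow> 'a pmf \<Rightarrow> 'a list pmf" where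
  "iid_list m p \<equiv> replicate_pmf m p"

definition poisson_factor :: "nat \<Rightarrow> nat \<Rightarrow> ('o list \<Rightarrow> real) pmf \<Rightarrow> 'o factor pmf" where
  "poisson_factor n k \<rho> = do {
      \<psi> \<leftarrow> \<rho>;
      vs \<leftarrow> pmf_of_set {vs. length vs = k \<and> set vs \<subseteq> {..<n}};
      return_pmf (\<psi>, vs) }"

definition poisson_model :: "real \<Rightarrow> nat \<Rightarrow> ('o list \<Rightarrow> real) pmf \<Rightarrow> nat \<Rightarrow> 'o fgraph pmf" where
  "poisson_model d k \<rho> n = do {
      m \<leftarrow> poisson_pmf (d * real n / real k);
      replicate_pmf m (poisson_factor n k \<rho>) }"

text \<open>psi^J, with J a subset of the (0-based) positions {0..<k}; the argument lists the
  values of the positions in J in increasing order.\<close>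
definition restrict_wt :: "nat \<Rightarrow> ('o::finite list \<Rightarrow> real) \<Rightarrow> nat set \<Rightarrow> 'o list \<Rightarrow> real" where
  "restrict_wt k \<psi> J ys =
     (\<Sum>\<tau>\<in>{\<tau>. length \<tau> = k \<and> nths \<tau> J = ys}. \<psi> \<tau>) / real (CARD('o)) ^ (k - card J)"

definition perc_data :: "real \<Rightarrow> nat \<Rightarrow> ('o list \<Rightarrow> real) pmf \<Rightarrow> (nat set \<times> ('o list \<Rightarrow> real)) pmf" where
  "perc_data \<epsilon> k \<rho> = do {
      bs \<leftarrow> replicate_pmf k (bernoulli_pmf (1 - \<epsilon>));
      \<psi> \<leftarrow> \<rho>;
      return_pmf ({j. j < k \<and> bs ! j}, \<psi>) }"

definition degree :: "nat list list \<Rightarrow> nat \<Rightarrow> nat" where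
  "degree vss v = length (filter (\<lambda>u. u = v) (concat vss))"

definition reg_tuples :: "real \<Rightarrow> nat \<Rightarrow> nat list \<Rightarrow> nat list list set" where
  "reg_tuples d n ls = {vss. length vss = length ls \<and>
        (\<forall>i<length ls. length (vss ! i) = ls ! i \<and> set (vss ! i) \<subseteq> {..<n}) \<and>
        (\<forall>v<n. real (degree vss v) \<le> d)}"

text \<open>(REG1)-(REG3); "start over" amounts to conditioning on the event sum |J_i| \<le> dn.\<close>
definition perc_reg_model ::
  "real \<Rightarrow> real \<Rightarrow> nat \<Rightarrow> ('o::finite list \<Rightarrow> real) pmf \<Rightarrow> nat \<Rightarrow> 'o fgraph pmf" where
  "perc_reg_model d \<epsilon> k \<rho> n = do {
      js \<leftarrow> cond_pmf (do { m \<leftarrow> poisson_pmf (d * real n / real k);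
                           replicate_pmf m (perc_data \<epsilon> k \<rho>) })
                     {js. real (sum_list (map (\<lambda>(J, _). card J) js)) \<le> d * real n};
      vss \<leftarrow> pmf_of_set (reg_tuples d n (map (\<lambda>(J, _). card J) js));
      return_pmf (map2 (\<lambda>(J, \<psi>) vs. (restrict_wt k \<psi> J, vs)) js vss) }"

end

theory Submission
  imports Defs
begin

text \<open>For a far pair (i, j), i.e. one where j lies outside the l-ball around i, the spin of j is
  constant on each block of configurations that agree outside that ball. Averaging over the blocks
  therefore expresses the joint law of (i, j) through the conditional marginals of i given the
  block, so the distance of the two-point marginal from the product measure is at most the
  spatial mixing error of i at radius l. Close pairs contribute at most 1 each; it remains to see
  that only o(n^2) pairs are close. If all degrees are bounded by D, an l-ball has at most
  (l + 1) (k + D + 1)^l variables. In the percolated regular model D = d deterministically, and in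
  the Poisson model all degrees are below 2 log n except with probability O(1/n), because
  E 2^deg(v) \<le> e^d.\<close>

lemma integrable_measure_pmf_bounded:
  fixes f :: "'a \<Rightarrow> real"
  assumes "\<And>x. x \<in> set_pmf p \<Longrightarrow> \<bar>f x\<bar> \<le> B"
  shows "integrable (measure_pmf p) f"
  by (rule measure_pmf.integrable_const_bound[where B=B]) (auto simp: AE_measure_pmf_iff assms)

lemma tv_dist_nonneg: "tv_dist p q \<ge> 0"
  unfolding tv_dist_def by (simp add: sum_nonneg)

lemma tv_dist_le_1:
  fixes p q :: "'a::finite \<Rightarrow> real"
  assumes "\<And>a. p a \<ge> 0" "\<And>a. q a \<ge> 0" "sum p UNIV \<le> 1" "sum q UNIV \<le> 1"
  shows "tv_dist p q \<le> 1"
proof -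
  have "(\<Sum>a\<in>UNIV. \<bar>p a - q a\<bar>) \<le> (\<Sum>a\<in>UNIV. p a + q a)"
    by (intro sum_mono) (use assms in \<open>auto simp: abs_le_iff\<close>)
  then show ?thesis using assms unfolding tv_dist_def by (simp add: sum.distrib)
qed

lemma tendsto_0_by_limsup_bounds:
  fixes a :: "nat \<Rightarrow> real" and b c :: "nat \<Rightarrow> nat \<Rightarrow> real"
  assumes a_nonneg: "\<And>n. 0 \<le> a n"
    and bound: "\<And>l. eventually (\<lambda>n. a n \<le> b l n + c l n) sequentially"
    and b: "\<And>l. b l \<longlonglongrightarrow> 0"
    and c: "(\<lambda>l. limsup (\<lambda>n. ereal (c l n))) \<longlonglongrightarrow> 0"
  shows "a \<longlonglongrightarrow> 0"
proof (rule order_tendstoI)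
  fix e :: real
  assume "e < 0"
  then show "eventually (\<lambda>n. e < a n) sequentially"
    using a_nonneg by (intro always_eventually) (meson less_le_trans)
next
  fix e :: real
  assume e: "0 < e"
  then have "eventually (\<lambda>l. limsup (\<lambda>n. ereal (c l n)) < ereal (e/2)) sequentially"
    using order_tendstoD(2)[OF c] by simp
  then obtain l where "limsup (\<lambda>n. ereal (c l n)) < ereal (e/2)"
    by (auto simp: eventually_sequentially)
  then have "eventually (\<lambda>n. ereal (c l n) < ereal (e/2)) sequentially"
    by (rule Limsup_lessD)
  moreover have "eventually (\<lambda>n. b l n < e/2) sequentially"
    using order_tendstoD(2)[OF b[of l], of "e/2"] e by simp
  ultimately show "eventually (\<lambda>n. a n < e) sequentially"
    using bound[of l] by eventually_elim simp
qed

lemma nn_integral_poisson_pmf_power: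
  assumes r: "0 < r" and c: "0 \<le> c"
  shows "(\<integral>\<^sup>+m. ennreal (c ^ m) \<partial>poisson_pmf r) = ennreal (exp (r * (c - 1)))"
proof -
  have "(\<lambda>m. (r * c) ^ m / fact m) sums exp (r * c)"
    using exp_converges[of "r * c"] by (simp add: divide_inverse_commute)
  then have "(\<lambda>m. (r * c) ^ m / fact m * exp (-r)) sums (exp (r * c) * exp (-r))"
    by (rule sums_mult2)
  then have sums: "(\<lambda>m. r ^ m / fact m * exp (-r) * c ^ m) sums (exp (r * c) * exp (-r))"
    by (simp add: power_mult_distrib mult_ac)
  have "(\<integral>\<^sup>+m. ennreal (c ^ m) \<partial>poisson_pmf r)
      = (\<Sum>m. ennreal (r ^ m / fact m * exp (-r) * c ^ m))"
    unfolding nn_integral_measure_pmf nn_integral_count_space_nat[symmetric] using r c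
    by (intro nn_integral_cong) (simp add: ennreal_mult'[symmetric])
  also have "\<dots> = ennreal (exp (r * c) * exp (-r))"
    using sums r c by (simp add: suminf_ennreal2 sums_iff)
  also have "exp (r * c) * exp (-r) = exp (r * (c - 1))"
    by (simp add: exp_add[symmetric] algebra_simps)
  finally show ?thesis .
qed

lemma nn_integral_replicate_pmf_prod_list:
  assumes "\<And>x. h x \<ge> (0::real)"
  shows "(\<integral>\<^sup>+xs. ennreal (prod_list (map h xs)) \<partial>replicate_pmf m p)
      = (\<integral>\<^sup>+x. ennreal (h x) \<partial>p) ^ m"
proof (induction m)
  case (Suc m)
  have "(\<integral>\<^sup>+xs. ennreal (prod_list (map h xs)) \<partial>replicate_pmf (Suc m) p)
      = (\<integral>\<^sup>+x. ennreal (h x) * (\<integral>\<^sup>+xs. ennreal (prod_list (map h xs)) \<partial>replicate_pmf m p) \<partial>p)"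
    using assms by (simp add: ennreal_mult' prod_list_nonneg nn_integral_cmult)
  then show ?case
    by (simp add: Suc nn_integral_multc mult.commute)
qed simp

lemma power_minus_power_pred_le:
  assumes "n > (0::nat)"
  shows "real n ^ k - (real n - 1) ^ k \<le> real k / real n * real n ^ k"
proof -
  have "1 + real k * (- 1 / real n) \<le> (1 + (- 1 / real n)) ^ k"
    by (rule Bernoulli_inequality) (use assms in \<open>simp add: field_simps\<close>)
  then have "(1 - real k / real n) * real n ^ k \<le> (1 - 1 / real n) ^ k * real n ^ k"
    by (intro mult_right_mono) auto
  also have "(1 - 1 / real n) ^ k * real n ^ k = (real n - 1) ^ k"
    using assms by (simp add: power_mult_distrib[symmetric] algebra_simps)
  finally show ?thesis by (simp add: algebra_simps)
qed

lemma tendsto_log_power_over_n: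
  fixes c :: real
  assumes c: "c \<ge> 0"
  shows "(\<lambda>n::nat. (c + 2 * log 2 (real n)) ^ l / real n) \<longlonglongrightarrow> 0"
proof -
  define c' where "c' = c + 2 / ln 2"
  have ln_at_top: "filterlim (\<lambda>n::nat. ln (real n)) at_top sequentially"
    by (rule filterlim_compose[OF ln_at_top filterlim_real_sequentially])
  have lim: "(\<lambda>n::nat. c' ^ l * (ln (real n) ^ l / exp (ln (real n)))) \<longlonglongrightarrow> 0"
    by (intro tendsto_mult_right_zero filterlim_compose[OF tendsto_power_div_exp_0 ln_at_top])
  have ln_ge_1: "eventually (\<lambda>n::nat. 1 \<le> ln (real n)) sequentially"
    using ln_at_top by (simp add: filterlim_at_top)
  show ?thesis
  proof (rule real_tendsto_sandwich[OF _ _ tendsto_const lim])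
    show "eventually (\<lambda>n. 0 \<le> (c + 2 * log 2 (real n)) ^ l / real n) sequentially"
      using eventually_gt_at_top[of 0] by eventually_elim (use c in simp)
    show "eventually (\<lambda>n. (c + 2 * log 2 (real n)) ^ l / real n
        \<le> c' ^ l * (ln (real n) ^ l / exp (ln (real n)))) sequentially"
      using ln_ge_1
    proof eventually_elim
      case (elim n)
      then have n: "real n > 0" by (cases n) auto
      have "c + 2 * log 2 (real n) = c + (2 / ln 2) * ln (real n)"
        by (simp add: log_def)
      also have "\<dots> \<le> c' * ln (real n)"
        using elim c mult_left_mono[of 1 "ln (real n)" c] by (simp add: c'_def distrib_right)
      finally have "(c + 2 * log 2 (real n)) ^ l \<le> (c' * ln (real n)) ^ l"
        using n c by (intro power_mono) auto
      then show ?case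
        using n by (simp add: divide_right_mono power_mult_distrib)
    qed
  qed
qed

lemma expectation_le_on_good_event:
  fixes X :: "'a \<Rightarrow> real"
  assumes bounded: "\<And>x. x \<in> set_pmf p \<Longrightarrow> 0 \<le> X x \<and> X x \<le> B"
    and good: "\<And>x. x \<in> set_pmf p \<Longrightarrow> x \<notin> E \<Longrightarrow> X x \<le> A" and A: "0 \<le> A"
  shows "measure_pmf.expectation p X \<le> A + B * measure_pmf.prob p E"
proof -
  have B: "0 \<le> B" using bounded set_pmf_not_empty by fastforce
  have "measure_pmf.expectation p X \<le> measure_pmf.expectation p (\<lambda>x. A + B * indicator E x)"
  proof (rule integral_mono_AE)
    show "integrable p X"
      using bounded by (intro integrable_measure_pmf_bounded[where B=B]) auto
    show "integrable p (\<lambda>x. A + B * indicator E x)"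
      by (intro integrable_measure_pmf_bounded[where B="A + B"]) (use A B in \<open>simp split: split_indicator\<close>)
    show "AE x in p. X x \<le> A + B * indicator E x"
      unfolding AE_measure_pmf_iff
    proof
      fix x assume "x \<in> set_pmf p"
      then show "X x \<le> A + B * indicator E x"
        using bounded[of x] good[of x] A by (cases "x \<in> E") auto
    qed
  qed
  also have "\<dots> = A + B * measure_pmf.prob p E"
  proof -
    have "integrable p (\<lambda>x. B * indicator E x)"
      by (intro integrable_measure_pmf_bounded[where B=B]) (use B in \<open>simp split: split_indicator\<close>)
    then show ?thesis
      by (simp add: Bochner_Integration.integral_add measure_pmf.prob_space)
  qed
  finally show ?thesis .
qed

lemma ceiling_two_log_bounds:
  assumes "n > (0::nat)"
  shows "real n ^ 2 \<le> (2::real) ^ nat \<lceil>2 * log 2 (real n)\<rceil>"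
    and "real (nat \<lceil>2 * log 2 (real n)\<rceil>) \<le> 2 * log 2 (real n) + 1"
proof -
  have lg: "log 2 (real n) \<ge> 0" using assms by simp
  have "2 powr (2 * log 2 (real n)) = 2 powr (log 2 (real n)) * 2 powr (log 2 (real n))"
    by (simp only: mult_2 powr_add)
  then have "real n ^ 2 = 2 powr (2 * log 2 (real n))"
    using assms by (simp add: power2_eq_square)
  also have "\<dots> \<le> 2 powr real (nat \<lceil>2 * log 2 (real n)\<rceil>)"
    using lg by (intro powr_mono) linarith+
  finally show "real n ^ 2 \<le> (2::real) ^ nat \<lceil>2 * log 2 (real n)\<rceil>"
    by (simp add: powr_realpow)
  show "real (nat \<lceil>2 * log 2 (real n)\<rceil>) \<le> 2 * log 2 (real n) + 1"
    using lg by linarith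
qed

section \<open>Gibbs measures\<close>

definition nonneg_weights :: "nat \<Rightarrow> 'o::finite fgraph \<Rightarrow> bool" where
  "nonneg_weights n g \<longleftrightarrow> (\<forall>\<sigma>\<in>configs n. fg_weight g \<sigma> \<ge> 0)"

definition pair_dependence :: "nat \<Rightarrow> 'o::finite fgraph \<Rightarrow> nat \<Rightarrow> nat \<Rightarrow> real" where
  "pair_dependence n g i j =
     tv_dist (marg2 n g i j) (\<lambda>(\<omega>, \<omega>'). marg1 n g i \<omega> * marg1 n g j \<omega>')"

definition mixing_error :: "nat \<Rightarrow> 'o::finite fgraph \<Rightarrow> nat \<Rightarrow> nat \<Rightarrow> real" where
  "mixing_error n g l i =
     (\<Sum>\<sigma>\<in>configs n. gibbs n g \<sigma> * tv_dist (marg1 n g i) (cond_marg1 n g i (nabla n g l i \<sigma>)))"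

lemma finite_configs [simp]: "finite (configs n :: (nat \<Rightarrow> 'o::finite) set)"
  by (simp add: configs_def finite_PiE)

lemma nabla_subset_configs: "nabla n g l i \<sigma> \<subseteq> configs n"
  by (auto simp: nabla_def)

lemma finite_nabla [simp]: "finite (nabla n g l i \<sigma>)"
  using finite_subset[OF nabla_subset_configs] by simp

lemma self_in_nabla: "\<sigma> \<in> configs n \<Longrightarrow> \<sigma> \<in> nabla n g l i \<sigma>"
  by (auto simp: nabla_def)

lemma nabla_sym: "\<tau> \<in> nabla n g l i \<sigma> \<Longrightarrow> \<sigma> \<in> configs n \<Longrightarrow> \<sigma> \<in> nabla n g l i \<tau>"
  by (auto simp: nabla_def)

lemma nabla_eq: "\<tau> \<in> nabla n g l i \<sigma> \<Longrightarrow> nabla n g l i \<tau> = nabla n g l i \<sigma>"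
  by (auto simp: nabla_def)

lemma nabla_far_eq: "\<tau> \<in> nabla n g l i \<sigma> \<Longrightarrow> j < n \<Longrightarrow> \<not> dist_le g l i j \<Longrightarrow> \<tau> j = \<sigma> j"
  by (auto simp: nabla_def)

lemma sum_configs_group:
  fixes h :: "(nat \<Rightarrow> 'o::finite) \<Rightarrow> real"
  shows "(\<Sum>t\<in>UNIV. \<Sum>\<sigma>\<in>{\<sigma>\<in>configs n. \<sigma> j = t}. h \<sigma>) = (\<Sum>\<sigma>\<in>configs n. h \<sigma>)"
  by (rule sum.group) auto

context
  fixes n :: nat and g :: "'o::finite fgraph"
  assumes nonneg: "nonneg_weights n g"
begin

lemma gibbs_nonneg: "gibbs n g \<sigma> \<ge> 0"
proof -
  have "partition_fn n g \<ge> 0"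
    using nonneg unfolding partition_fn_def nonneg_weights_def by (intro sum_nonneg) auto
  then show ?thesis using nonneg by (auto simp: gibbs_def nonneg_weights_def)
qed

lemma sum_gibbs_le_1: "(\<Sum>\<sigma>\<in>configs n. gibbs n g \<sigma>) \<le> 1"
proof -
  have "(\<Sum>\<sigma>\<in>configs n. gibbs n g \<sigma>) = (\<Sum>\<sigma>\<in>configs n. fg_weight g \<sigma>) / partition_fn n g"
    by (simp add: gibbs_def sum_divide_distrib)
  also have "\<dots> \<le> 1" by (simp add: partition_fn_def divide_le_eq_1)
  finally show ?thesis .
qed

lemma gibbs_le_1: "gibbs n g \<sigma> \<le> 1"
proof (cases "\<sigma> \<in> configs n")
  case True
  then have "gibbs n g \<sigma> \<le> (\<Sum>\<sigma>\<in>configs n. gibbs n g \<sigma>)"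
    by (intro member_le_sum) (auto simp: gibbs_nonneg)
  then show ?thesis using sum_gibbs_le_1 by linarith
qed (simp add: gibbs_def)

lemma marg1_nonneg: "marg1 n g i s \<ge> 0"
  unfolding marg1_def by (intro sum_nonneg) (simp add: gibbs_nonneg)

lemma sum_marg1: "(\<Sum>s\<in>UNIV. marg1 n g i s) = (\<Sum>\<sigma>\<in>configs n. gibbs n g \<sigma>)"
  unfolding marg1_def by (rule sum_configs_group)

lemma marg2_nonneg: "marg2 n g i j p \<ge> 0"
  unfolding marg2_def by (cases p) (auto intro!: sum_nonneg simp: gibbs_nonneg)

lemma sum_marg2: "(\<Sum>p\<in>UNIV. marg2 n g i j p) = (\<Sum>\<sigma>\<in>configs n. gibbs n g \<sigma>)"
proof -
  have "(\<Sum>p\<in>UNIV. marg2 n g i j p) = (\<Sum>p\<in>UNIV. \<Sum>\<sigma>\<in>{\<sigma>\<in>configs n. (\<sigma> i, \<sigma> j) = p}. gibbs n g \<sigma>)"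
    by (rule sum.cong) (auto simp: marg2_def)
  also have "\<dots> = (\<Sum>\<sigma>\<in>configs n. gibbs n g \<sigma>)" by (rule sum.group) auto
  finally show ?thesis .
qed

lemma cond_marg1_nonneg: "cond_marg1 n g i E s \<ge> 0"
  unfolding cond_marg1_def by (intro divide_nonneg_nonneg sum_nonneg) (simp_all add: gibbs_nonneg)

lemma sum_cond_marg1_le_1: "(\<Sum>s\<in>UNIV. cond_marg1 n g i E s) \<le> 1"
proof -
  let ?Z = "\<Sum>\<sigma>\<in>configs n \<inter> E. gibbs n g \<sigma>"
  have "(\<Sum>s\<in>UNIV. cond_marg1 n g i E s)
      = (\<Sum>s\<in>UNIV. \<Sum>\<sigma>\<in>{\<sigma>\<in>configs n \<inter> E. \<sigma> i = s}. gibbs n g \<sigma>) / ?Z"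
    unfolding cond_marg1_def by (simp add: sum_divide_distrib)
  also have "(\<Sum>s\<in>UNIV. \<Sum>\<sigma>\<in>{\<sigma>\<in>configs n \<inter> E. \<sigma> i = s}. gibbs n g \<sigma>) = ?Z"
    by (rule sum.group) auto
  finally show ?thesis by (simp add: divide_le_eq_1)
qed

lemma mixing_error_nonneg: "mixing_error n g l i \<ge> 0"
  unfolding mixing_error_def by (intro sum_nonneg mult_nonneg_nonneg gibbs_nonneg tv_dist_nonneg)

lemma abs_gibbs_mult_tv_le_1:
  "\<bar>gibbs n g \<sigma> * tv_dist (marg1 n g i) (cond_marg1 n g i E)\<bar> \<le> 1"
proof -
  have "tv_dist (marg1 n g i) (cond_marg1 n g i E) \<le> 1"
    using sum_marg1 sum_gibbs_le_1
    by (intro tv_dist_le_1) (auto simp: marg1_nonneg cond_marg1_nonneg sum_cond_marg1_le_1)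
  then show ?thesis
    using gibbs_nonneg[of \<sigma>] gibbs_le_1[of \<sigma>] tv_dist_nonneg[of "marg1 n g i" "cond_marg1 n g i E"]
    by (simp add: abs_mult mult_le_one)
qed

lemma pair_dependence_le_1: "pair_dependence n g i j \<le> 1"
proof -
  let ?S = "\<Sum>\<sigma>\<in>configs n. gibbs n g \<sigma>"
  have S: "0 \<le> ?S" "?S \<le> 1" by (auto intro: sum_nonneg gibbs_nonneg sum_gibbs_le_1)
  have "(\<Sum>p\<in>UNIV. (\<lambda>(\<omega>, \<omega>'). marg1 n g i \<omega> * marg1 n g j \<omega>') p)
      = (\<Sum>s\<in>UNIV. marg1 n g i s) * (\<Sum>t\<in>UNIV. marg1 n g j t)"
    by (simp add: sum_product sum.cartesian_product UNIV_Times_UNIV[symmetric] del: UNIV_Times_UNIV)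
  then have "(\<Sum>p\<in>UNIV. (\<lambda>(\<omega>, \<omega>'). marg1 n g i \<omega> * marg1 n g j \<omega>') p) \<le> 1"
    using S by (simp add: sum_marg1 mult_le_one)
  then show ?thesis
    unfolding pair_dependence_def
    using S by (intro tv_dist_le_1) (auto simp: marg2_nonneg marg1_nonneg sum_marg2)
qed

lemma sum_nabla_normalised:
  assumes "\<tau> \<in> configs n"
  shows "(\<Sum>\<sigma>\<in>nabla n g l i \<tau>. gibbs n g \<sigma> * gibbs n g \<tau> / (\<Sum>\<rho>\<in>nabla n g l i \<sigma>. gibbs n g \<rho>))
    = gibbs n g \<tau>"
proof -
  let ?N = "nabla n g l i" and ?\<mu> = "gibbs n g"
  let ?Z = "\<Sum>\<rho>\<in>?N \<tau>. ?\<mu> \<rho>"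
  have "(\<Sum>\<sigma>\<in>?N \<tau>. ?\<mu> \<sigma> * ?\<mu> \<tau> / (\<Sum>\<rho>\<in>?N \<sigma>. ?\<mu> \<rho>)) = (\<Sum>\<sigma>\<in>?N \<tau>. ?\<mu> \<sigma> * ?\<mu> \<tau> / ?Z)"
    by (rule sum.cong) (auto simp: nabla_eq)
  also have "\<dots> = ?Z * ?\<mu> \<tau> / ?Z"
    by (simp add: sum_distrib_right sum_divide_distrib)
  also have "\<dots> = ?\<mu> \<tau>"
  proof (cases "?\<mu> \<tau> = 0")
    case False
    have "?\<mu> \<tau> \<le> ?Z"
      using assms by (intro member_le_sum self_in_nabla) (auto simp: gibbs_nonneg)
    then have "?Z \<noteq> 0" using False gibbs_nonneg[of \<tau>] by linarith
    then show ?thesis by simp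
  qed simp
  finally show ?thesis .
qed

lemma sum_nabla_blocks_containing:
  assumes j: "j < n" and far: "\<not> dist_le g l i j" and \<tau>: "\<tau> \<in> configs n"
  shows "(\<Sum>\<sigma>\<in>configs n. if \<sigma> j = t \<and> \<tau> \<in> nabla n g l i \<sigma> \<and> \<tau> i = s
            then gibbs n g \<sigma> * gibbs n g \<tau> / (\<Sum>\<rho>\<in>nabla n g l i \<sigma>. gibbs n g \<rho>) else 0)
    = (if \<tau> i = s \<and> \<tau> j = t then gibbs n g \<tau> else 0)"
proof -
  let ?C = "configs n :: (nat \<Rightarrow> 'o) set" and ?\<mu> = "gibbs n g" and ?N = "nabla n g l i"
  let ?f = "\<lambda>\<sigma>. ?\<mu> \<sigma> * ?\<mu> \<tau> / (\<Sum>\<rho>\<in>?N \<sigma>. ?\<mu> \<rho>)"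
  have block: "\<sigma> j = t \<and> \<tau> \<in> ?N \<sigma> \<and> \<tau> i = s \<longleftrightarrow> \<sigma> \<in> ?N \<tau> \<and> \<tau> i = s \<and> \<tau> j = t"
    if "\<sigma> \<in> ?C" for \<sigma>
    using that \<tau> nabla_sym nabla_far_eq[OF _ j far] by metis
  have "(\<Sum>\<sigma>\<in>?C. if \<sigma> j = t \<and> \<tau> \<in> ?N \<sigma> \<and> \<tau> i = s then ?f \<sigma> else 0)
      = (\<Sum>\<sigma>\<in>?C. if \<sigma> \<in> ?N \<tau> \<and> \<tau> i = s \<and> \<tau> j = t then ?f \<sigma> else 0)"
    by (rule sum.cong) (simp_all add: block)
  also have "\<dots> = (if \<tau> i = s \<and> \<tau> j = t then (\<Sum>\<sigma>\<in>?N \<tau>. ?f \<sigma>) else 0)"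
  proof (cases "\<tau> i = s \<and> \<tau> j = t")
    case True
    have "{\<sigma>\<in>?C. \<sigma> \<in> ?N \<tau>} = ?N \<tau>" using nabla_subset_configs by blast
    then show ?thesis using True by (simp add: sum.inter_filter[symmetric])
  qed (auto intro: sum.neutral)
  also have "\<dots> = (if \<tau> i = s \<and> \<tau> j = t then ?\<mu> \<tau> else 0)"
    using sum_nabla_normalised[OF \<tau>] by simp
  finally show ?thesis .
qed

text \<open>The law of total probability over the blocks nabla n g l i sigma, using that the spin
  at the far node j is constant on each block.\<close>

lemma marg2_far_eq:
  assumes j: "j < n" and far: "\<not> dist_le g l i j"
  shows "marg2 n g i j (s, t) =
    (\<Sum>\<sigma>\<in>{\<sigma>\<in>configs n. \<sigma> j = t}. gibbs n g \<sigma> * cond_marg1 n g i (nabla n g l i \<sigma>) s)"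
proof -
  let ?C = "configs n :: (nat \<Rightarrow> 'o) set" and ?\<mu> = "gibbs n g" and ?N = "nabla n g l i"
  define f where "f \<sigma> \<tau> = (if \<sigma> j = t \<and> \<tau> \<in> ?N \<sigma> \<and> \<tau> i = s
    then ?\<mu> \<sigma> * ?\<mu> \<tau> / (\<Sum>\<rho>\<in>?N \<sigma>. ?\<mu> \<rho>) else 0)" for \<sigma> \<tau>
  have "?\<mu> \<sigma> * cond_marg1 n g i (?N \<sigma>) s = (\<Sum>\<tau>\<in>?C. f \<sigma> \<tau>)" if "\<sigma> j = t" for \<sigma>
  proof -
    have "?C \<inter> ?N \<sigma> = ?N \<sigma>" and "{\<tau>\<in>?N \<sigma>. \<tau> i = s} = {\<tau>\<in>?C. \<tau> \<in> ?N \<sigma> \<and> \<tau> i = s}"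
      using nabla_subset_configs by blast+
    then show ?thesis
      using that unfolding cond_marg1_def f_def
      by (simp add: sum.inter_filter[symmetric] sum_distrib_left sum_divide_distrib)
  qed
  moreover have "(\<Sum>\<tau>\<in>?C. f \<sigma> \<tau>) = 0" if "\<sigma> j \<noteq> t" for \<sigma>
    using that by (simp add: f_def)
  ultimately have "(\<Sum>\<sigma>\<in>{\<sigma>\<in>?C. \<sigma> j = t}. ?\<mu> \<sigma> * cond_marg1 n g i (?N \<sigma>) s)
      = (\<Sum>\<sigma>\<in>?C. \<Sum>\<tau>\<in>?C. f \<sigma> \<tau>)"
    by (simp add: sum.inter_filter) (rule sum.cong, auto)
  also have "\<dots> = (\<Sum>\<tau>\<in>?C. \<Sum>\<sigma>\<in>?C. f \<sigma> \<tau>)"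
    by (rule sum.swap)
  also have "\<dots> = (\<Sum>\<tau>\<in>?C. if \<tau> i = s \<and> \<tau> j = t then ?\<mu> \<tau> else 0)"
    unfolding f_def by (intro sum.cong refl sum_nabla_blocks_containing[OF j far])
  also have "\<dots> = marg2 n g i j (s, t)"
    by (simp add: marg2_def sum.inter_filter)
  finally show ?thesis ..
qed

lemma pair_dependence_far_le:
  assumes j: "j < n" and far: "\<not> dist_le g l i j"
  shows "pair_dependence n g i j \<le> mixing_error n g l i"
proof -
  let ?C = "configs n :: (nat \<Rightarrow> 'o) set" and ?\<mu> = "gibbs n g" and ?m = "marg1 n g i"
  let ?cm = "\<lambda>\<sigma>. cond_marg1 n g i (nabla n g l i \<sigma>)"
  have diff: "marg2 n g i j (s, t) - ?m s * marg1 n g j t =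
      (\<Sum>\<sigma>\<in>{\<sigma>\<in>?C. \<sigma> j = t}. ?\<mu> \<sigma> * (?cm \<sigma> s - ?m s))" for s t
  proof -
    have "?m s * marg1 n g j t = (\<Sum>\<sigma>\<in>{\<sigma>\<in>?C. \<sigma> j = t}. ?\<mu> \<sigma> * ?m s)"
      by (simp add: marg1_def sum_distrib_left sum_distrib_right mult.commute)
    then show ?thesis
      using marg2_far_eq[OF j far] by (simp add: right_diff_distrib sum_subtractf)
  qed
  have "(\<Sum>p\<in>UNIV. \<bar>marg2 n g i j p - (\<lambda>(\<omega>, \<omega>'). ?m \<omega> * marg1 n g j \<omega>') p\<bar>)
      = (\<Sum>s\<in>UNIV. \<Sum>t\<in>UNIV. \<bar>marg2 n g i j (s, t) - ?m s * marg1 n g j t\<bar>)"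
    by (simp add: sum.cartesian_product UNIV_Times_UNIV[symmetric] del: UNIV_Times_UNIV)
       (rule sum.cong, auto)
  also have "\<dots> \<le> (\<Sum>s\<in>UNIV. \<Sum>t\<in>UNIV. \<Sum>\<sigma>\<in>{\<sigma>\<in>?C. \<sigma> j = t}. ?\<mu> \<sigma> * \<bar>?cm \<sigma> s - ?m s\<bar>)"
    unfolding diff
    by (intro sum_mono order.trans[OF sum_abs]) (simp add: abs_mult gibbs_nonneg)
  also have "\<dots> = (\<Sum>t\<in>UNIV. \<Sum>\<sigma>\<in>{\<sigma>\<in>?C. \<sigma> j = t}. \<Sum>s\<in>UNIV. ?\<mu> \<sigma> * \<bar>?cm \<sigma> s - ?m s\<bar>)"
    by (subst sum.swap) (rule sum.cong[OF refl], rule sum.swap)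
  also have "\<dots> = (\<Sum>\<sigma>\<in>?C. \<Sum>s\<in>UNIV. ?\<mu> \<sigma> * \<bar>?cm \<sigma> s - ?m s\<bar>)"
    by (rule sum_configs_group)
  also have "\<dots> = 2 * mixing_error n g l i"
    unfolding mixing_error_def tv_dist_def
    by (simp add: sum_distrib_left sum_distrib_right abs_minus_commute
        sum_divide_distrib[symmetric] mult.commute)
  finally show ?thesis unfolding pair_dependence_def tv_dist_def by simp
qed

end

lemma nonneg_weightsI:
  assumes "\<And>\<psi> vs \<tau>. (\<psi>, vs) \<in> set g \<Longrightarrow> length \<tau> = length vs \<Longrightarrow> \<psi> \<tau> \<ge> 0"
  shows "nonneg_weights n g"
  unfolding nonneg_weights_def fg_weight_def
  by (intro ballI prod_list_nonneg) (auto intro: assms)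

definition close_pairs :: "nat \<Rightarrow> nat \<Rightarrow> 'o fgraph \<Rightarrow> real" where
  "close_pairs l n g = real (\<Sum>i<n. card {j. j < n \<and> dist_le g l i j})"

lemma close_pairs_nonneg: "0 \<le> close_pairs l n g"
  unfolding close_pairs_def by (rule of_nat_0_le_iff)

lemma close_pairs_le_square: "close_pairs l n g \<le> real n ^ 2"
proof -
  have "(\<Sum>i<n. card {j. j < n \<and> dist_le g l i j}) \<le> (\<Sum>i<n. card {..<n})"
    by (intro sum_mono card_mono) auto
  then have "close_pairs l n g \<le> real (n * n)"
    unfolding close_pairs_def by (simp only: of_nat_le_iff) simp
  then show ?thesis by (simp add: power2_eq_square)
qed

lemma pair_dependence_nonneg: "pair_dependence n g i j \<ge> 0"
  unfolding pair_dependence_def by (rule tv_dist_nonneg)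

lemma sum_pair_dependence_le:
  assumes nonneg: "nonneg_weights n g"
  shows "(\<Sum>i<n. \<Sum>j<n. pair_dependence n g i j)
    \<le> close_pairs l n g + real n * (\<Sum>i<n. mixing_error n g l i)"
proof -
  have "pair_dependence n g i j \<le> (if dist_le g l i j then 1 else 0) + mixing_error n g l i"
    if "j < n" for i j
    using pair_dependence_le_1[OF nonneg, of i j] pair_dependence_far_le[OF nonneg that, of l i]
      mixing_error_nonneg[OF nonneg, of l i] by (cases "dist_le g l i j") simp_all
  then have "(\<Sum>i<n. \<Sum>j<n. pair_dependence n g i j)
      \<le> (\<Sum>i<n. \<Sum>j<n. (if dist_le g l i j then 1 else 0) + mixing_error n g l i)"
    by (intro sum_mono) auto
  also have "\<dots> = close_pairs l n g + real n * (\<Sum>i<n. mixing_error n g l i)"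
    by (simp add: close_pairs_def sum.distrib sum.If_cases lessThan_def Collect_conj_eq
        Int_commute sum_distrib_left)
  finally show ?thesis .
qed

lemma expected_pair_dependence_le:
  fixes G :: "'o::finite fgraph pmf"
  assumes nonneg: "\<And>g. g \<in> set_pmf G \<Longrightarrow> nonneg_weights n g" and n: "n > 0"
  shows "(1 / real n ^ 2) * (\<Sum>i<n. \<Sum>j<n. measure_pmf.expectation G (\<lambda>g. pair_dependence n g i j))
     \<le> measure_pmf.expectation G (close_pairs l n) / real n ^ 2 +
        (1 / real n) * (\<Sum>i<n. \<Sum>\<sigma>\<in>configs n. measure_pmf.expectation G (\<lambda>g.
           gibbs n g \<sigma> * tv_dist (marg1 n g i) (cond_marg1 n g i (nabla n g l i \<sigma>))))"
proof -
  let ?E = "measure_pmf.expectation G"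
  let ?h = "\<lambda>i \<sigma> g. gibbs n g \<sigma> * tv_dist (marg1 n g i) (cond_marg1 n g i (nabla n g l i \<sigma>))"
  have int_pair: "integrable G (\<lambda>g. pair_dependence n g i j)" for i j
    by (intro integrable_measure_pmf_bounded[where B=1])
      (simp add: abs_of_nonneg pair_dependence_nonneg pair_dependence_le_1 nonneg)
  have int_h: "integrable G (?h i \<sigma>)" for i \<sigma>
    by (intro integrable_measure_pmf_bounded[where B=1] abs_gibbs_mult_tv_le_1 nonneg)
  have int_close: "integrable G (close_pairs l n)"
    by (intro integrable_measure_pmf_bounded[where B="real n ^ 2"])
      (simp add: abs_of_nonneg close_pairs_nonneg close_pairs_le_square)
  have "(\<Sum>i<n. \<Sum>j<n. ?E (\<lambda>g. pair_dependence n g i j))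
      = ?E (\<lambda>g. \<Sum>i<n. \<Sum>j<n. pair_dependence n g i j)"
    using int_pair by (simp add: Bochner_Integration.integral_sum)
  also have "\<dots> \<le> ?E (\<lambda>g. close_pairs l n g + real n * (\<Sum>i<n. mixing_error n g l i))"
  proof (rule integral_mono_AE)
    show "AE g in G. (\<Sum>i<n. \<Sum>j<n. pair_dependence n g i j)
        \<le> close_pairs l n g + real n * (\<Sum>i<n. mixing_error n g l i)"
      by (simp add: AE_measure_pmf_iff sum_pair_dependence_le nonneg)
  qed (use int_pair int_h int_close in \<open>simp_all add: mixing_error_def\<close>)
  also have "\<dots> = ?E (close_pairs l n) + real n * (\<Sum>i<n. \<Sum>\<sigma>\<in>configs n. ?E (?h i \<sigma>))"
    using int_h int_close
    by (simp add: mixing_error_def Bochner_Integration.integral_sum Bochner_Integration.integral_add)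
  finally have "(\<Sum>i<n. \<Sum>j<n. ?E (\<lambda>g. pair_dependence n g i j))
      \<le> ?E (close_pairs l n) + real n * (\<Sum>i<n. \<Sum>\<sigma>\<in>configs n. ?E (?h i \<sigma>))"
    (is "?L \<le> ?A + real n * ?B") .
  then have "(1 / real n ^ 2) * ?L \<le> (1 / real n ^ 2) * (?A + real n * ?B)"
    by (rule mult_left_mono) simp
  also have "\<dots> = ?A / real n ^ 2 + (1 / real n) * ?B"
    using n by (simp add: field_simps power2_eq_square)
  finally show ?thesis .
qed

lemma pair_dependence_tendsto_0:
  fixes G :: "nat \<Rightarrow> 'o::finite fgraph pmf"
  assumes nonneg: "\<And>n g. n > 0 \<Longrightarrow> g \<in> set_pmf (G n) \<Longrightarrow> nonneg_weights n g"
    and close: "\<And>l. (\<lambda>n. measure_pmf.expectation (G n) (close_pairs l n) / real n ^ 2) \<longlonglongrightarrow> 0"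
    and hyp: "(\<lambda>l. limsup (\<lambda>n. ereal (
                 (1 / real n) * (\<Sum>i<n. \<Sum>\<sigma>\<in>configs n.
                   measure_pmf.expectation (G n) (\<lambda>g.
                     gibbs n g \<sigma> * tv_dist (marg1 n g i) (cond_marg1 n g i (nabla n g l i \<sigma>)))))))
              \<longlonglongrightarrow> 0"
  shows "(\<lambda>n. (1 / real n ^ 2) *
           (\<Sum>i<n. \<Sum>j<n. measure_pmf.expectation (G n) (\<lambda>g. pair_dependence n g i j))) \<longlonglongrightarrow> 0"
proof (rule tendsto_0_by_limsup_bounds[OF _ _ close hyp])
  show "0 \<le> (1 / real n ^ 2) *
      (\<Sum>i<n. \<Sum>j<n. measure_pmf.expectation (G n) (\<lambda>g. pair_dependence n g i j))" for n
    by (intro mult_nonneg_nonneg sum_nonneg integral_nonneg_AE) (auto simp: pair_dependence_nonneg)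
  show "eventually (\<lambda>n. (1 / real n ^ 2) *
      (\<Sum>i<n. \<Sum>j<n. measure_pmf.expectation (G n) (\<lambda>g. pair_dependence n g i j))
    \<le> measure_pmf.expectation (G n) (close_pairs l n) / real n ^ 2 +
      (1 / real n) * (\<Sum>i<n. \<Sum>\<sigma>\<in>configs n. measure_pmf.expectation (G n) (\<lambda>g.
         gibbs n g \<sigma> * tv_dist (marg1 n g i) (cond_marg1 n g i (nabla n g l i \<sigma>)))))
    sequentially" for l
    using eventually_gt_at_top[of 0]
    by eventually_elim (rule expected_pair_dependence_le; simp add: nonneg)
qed

section \<open>Balls in factor graphs of bounded degree\<close>

definition var_degree :: "'o fgraph \<Rightarrow> nat \<Rightarrow> nat" where
  "var_degree g v = card {a. a < length g \<and> v \<in> set (snd (g ! a))}"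

definition fg_neighbours :: "'o fgraph \<Rightarrow> nat + nat \<Rightarrow> (nat + nat) set" where
  "fg_neighbours g w = {z. (w, z) \<in> fg_edges g}"

definition fg_sphere :: "'o fgraph \<Rightarrow> nat \<Rightarrow> nat \<Rightarrow> (nat + nat) set" where
  "fg_sphere g x j = {z. (Inl x, z) \<in> fg_edges g ^^ j}"

lemma fg_neighbours_Inl:
  "fg_neighbours g (Inl v) = Inr ` {a. a < length g \<and> v \<in> set (snd (g ! a))}"
  by (auto simp: fg_neighbours_def fg_edges_def)

lemma fg_neighbours_Inr:
  "fg_neighbours g (Inr a) = (if a < length g then Inl ` set (snd (g ! a)) else {})"
  by (auto simp: fg_neighbours_def fg_edges_def)

lemma finite_fg_neighbours: "finite (fg_neighbours g w)"
  by (cases w) (auto simp: fg_neighbours_Inl fg_neighbours_Inr)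

lemma card_fg_neighbours_le:
  assumes arity: "\<And>a. a < length g \<Longrightarrow> length (snd (g ! a)) \<le> k"
    and degree: "\<And>v. var_degree g v \<le> D"
  shows "card (fg_neighbours g w) \<le> k + D"
proof (cases w)
  case (Inl v)
  have "card (fg_neighbours g w) \<le> var_degree g v"
    unfolding Inl fg_neighbours_Inl var_degree_def by (rule card_image_le) simp
  then show ?thesis using degree[of v] by linarith
next
  case (Inr a)
  show ?thesis
  proof (cases "a < length g")
    case True
    have "card (fg_neighbours g w) \<le> card (set (snd (g ! a)))"
      unfolding Inr fg_neighbours_Inr using True by (simp add: card_image_le)
    also have "\<dots> \<le> length (snd (g ! a))" by (rule card_length)
    finally show ?thesis using arity[OF True] by linarith
  qed (simp add: Inr fg_neighbours_Inr)
qed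

lemma fg_sphere_0: "fg_sphere g x 0 = {Inl x}"
  by (auto simp: fg_sphere_def)

lemma fg_sphere_Suc: "fg_sphere g x (Suc j) = (\<Union>w\<in>fg_sphere g x j. fg_neighbours g w)"
  by (auto simp: fg_sphere_def fg_neighbours_def)

lemma finite_fg_sphere: "finite (fg_sphere g x j)"
  by (induction j) (auto simp: fg_sphere_0 fg_sphere_Suc finite_fg_neighbours)

lemma card_fg_sphere_le:
  assumes "\<And>a. a < length g \<Longrightarrow> length (snd (g ! a)) \<le> k" "\<And>v. var_degree g v \<le> D"
  shows "card (fg_sphere g x j) \<le> (k + D) ^ j"
proof (induction j)
  case (Suc j)
  have "card (fg_sphere g x (Suc j)) \<le> (\<Sum>w\<in>fg_sphere g x j. card (fg_neighbours g w))"
    unfolding fg_sphere_Suc by (rule card_UN_le) (rule finite_fg_sphere)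
  also have "\<dots> \<le> (\<Sum>w\<in>fg_sphere g x j. k + D)"
    by (intro sum_mono card_fg_neighbours_le[OF assms])
  also have "\<dots> \<le> (k + D) ^ Suc j" using Suc by simp
  finally show ?case .
qed (simp add: fg_sphere_0)

lemma dist_le_subset_spheres: "Inl ` {y. dist_le g l x y} \<subseteq> (\<Union>j\<le>l. fg_sphere g x j)"
  by (auto simp: dist_le_def fg_sphere_def)

lemma card_dist_le_le:
  assumes "\<And>a. a < length g \<Longrightarrow> length (snd (g ! a)) \<le> k" "\<And>v. var_degree g v \<le> D"
  shows "card {y. dist_le g l x y} \<le> (l + 1) * (k + D + 1) ^ l"
proof -
  have "card {y. dist_le g l x y} = card (Inl ` {y. dist_le g l x y} :: (nat + nat) set)"
    by (simp add: card_image)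
  also have "\<dots> \<le> card (\<Union>j\<le>l. fg_sphere g x j)"
    by (rule card_mono[OF _ dist_le_subset_spheres]) (simp add: finite_fg_sphere)
  also have "\<dots> \<le> (\<Sum>j\<le>l. card (fg_sphere g x j))"
    by (rule card_UN_le) simp
  also have "\<dots> \<le> (\<Sum>j\<le>l. (k + D + 1) ^ l)"
  proof (intro sum_mono)
    fix j assume "j \<in> {..l}"
    then have "(k + D) ^ j \<le> (k + D + 1) ^ j" "(k + D + 1) ^ j \<le> (k + D + 1) ^ l"
      by (auto intro: power_mono power_increasing)
    then show "card (fg_sphere g x j) \<le> (k + D + 1) ^ l"
      using card_fg_sphere_le[OF assms, of x j] by linarith
  qed
  finally show ?thesis by simp
qed

lemma finite_dist_le: "finite {y. dist_le g l x y}"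
  using finite_subset[OF dist_le_subset_spheres] by (simp add: finite_fg_sphere finite_image_iff)

lemma close_pairs_le_bounded_degree:
  assumes "\<And>a. a < length g \<Longrightarrow> length (snd (g ! a)) \<le> k" "\<And>v. var_degree g v \<le> D"
  shows "close_pairs l n g \<le> real n * (real (l + 1) * (real k + real D + 1) ^ l)"
proof -
  have "card {j. j < n \<and> dist_le g l i j} \<le> (l + 1) * (k + D + 1) ^ l" for i
    by (rule order.trans[OF card_mono[OF finite_dist_le] card_dist_le_le[OF assms]]) auto
  then have "(\<Sum>i<n. card {j. j < n \<and> dist_le g l i j}) \<le> (\<Sum>i<n. (l + 1) * (k + D + 1) ^ l)"
    by (intro sum_mono)
  then have "close_pairs l n g \<le> real (n * ((l + 1) * (k + D + 1) ^ l))"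
    unfolding close_pairs_def by (simp only: of_nat_le_iff) simp
  then show ?thesis by (simp add: algebra_simps)
qed

section \<open>The Poisson model\<close>

definition tuples :: "nat \<Rightarrow> nat \<Rightarrow> nat list set" where
  "tuples n k = {vs. length vs = k \<and> set vs \<subseteq> {..<n}}"

lemma finite_tuples: "finite (tuples n k)"
  using finite_lists_length_eq[of "{..<n}" k] by (simp add: tuples_def conj_commute)

lemma card_tuples: "card (tuples n k) = n ^ k"
  using card_lists_length_eq[of "{..<n}" k] by (simp add: tuples_def conj_commute)

lemma tuples_nonempty: "n > 0 \<Longrightarrow> tuples n k \<noteq> {}"
  by (auto simp: tuples_def intro!: exI[of _ "replicate k 0"])

lemma card_tuples_containing_le:
  assumes n: "n > 0"
  shows "real (card {vs\<in>tuples n k. v \<in> set vs}) \<le> real k / real n * real n ^ k"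
proof -
  let ?L = "tuples n k"
  let ?A = "{vs\<in>?L. v \<in> set vs}" and ?B = "{vs\<in>?L. v \<notin> set vs}"
  have "card ?A + card ?B = card (?A \<union> ?B)"
    using finite_tuples by (intro card_Un_disjoint[symmetric]) auto
  also have "?A \<union> ?B = ?L" by auto
  finally have "card ?A + card ?B = n ^ k" by (simp add: card_tuples)
  moreover have "card ?B \<ge> (n - 1) ^ k"
  proof -
    have "?B = {vs. set vs \<subseteq> {..<n} - {v} \<and> length vs = k}" by (auto simp: tuples_def)
    then have "card ?B = card ({..<n} - {v}) ^ k" by (simp add: card_lists_length_eq)
    then show ?thesis by (simp add: card_Diff_singleton_if power_mono)
  qed
  ultimately have "card ?A + (n - 1) ^ k \<le> n ^ k" by linarith
  then have "real (card ?A) + real ((n - 1) ^ k) \<le> real (n ^ k)"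
    by (simp only: of_nat_add[symmetric] of_nat_le_iff)
  then have "real (card ?A) \<le> real n ^ k - (real n - 1) ^ k"
    using n by (simp add: of_nat_diff)
  also have "\<dots> \<le> real k / real n * real n ^ k"
    by (rule power_minus_power_pred_le[OF n])
  finally show ?thesis .
qed

lemma nn_integral_poisson_factor_le:
  assumes n: "n > 0"
  shows "(\<integral>\<^sup>+f. ennreal (if v \<in> set (snd f) then 2 else 1) \<partial>poisson_factor n k \<rho>)
     \<le> ennreal (1 + real k / real n)"
proof -
  let ?L = "tuples n k"
  let ?A = "{vs\<in>?L. v \<in> set vs}"
  have "(\<Sum>vs\<in>?L. if v \<in> set vs then 2 else 1 :: real) = (\<Sum>vs\<in>?L. 1 + (if v \<in> set vs then 1 else 0))"
    by (rule sum.cong) auto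
  also have "\<dots> = real (card ?L) + real (card ?A)"
    using finite_tuples by (simp add: sum.distrib sum.If_cases Int_def)
  finally have sum_eq: "(\<Sum>vs\<in>?L. if v \<in> set vs then 2 else 1 :: real) = real n ^ k + real (card ?A)"
    by (simp add: card_tuples)
  have "(\<integral>\<^sup>+f. ennreal (if v \<in> set (snd f) then 2 else 1) \<partial>poisson_factor n k \<rho>)
      = (\<integral>\<^sup>+vs. ennreal (if v \<in> set vs then 2 else 1) \<partial>pmf_of_set ?L)"
    unfolding poisson_factor_def tuples_def[symmetric]
    by (simp add: measure_pmf.emeasure_space_1)
  also have "\<dots> = (\<Sum>vs\<in>?L. ennreal (if v \<in> set vs then 2 else 1)) / ennreal (real (card ?L))"
    using tuples_nonempty[OF n] finite_tuples
    by (simp add: nn_integral_pmf_of_set ennreal_of_nat_eq_real_of_nat)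
  also have "\<dots> = ennreal ((\<Sum>vs\<in>?L. if v \<in> set vs then 2 else 1) / real (card ?L))"
    using tuples_nonempty[OF n] finite_tuples
    by (subst sum_ennreal) (auto intro!: divide_ennreal sum_nonneg simp: card_gt_0_iff)
  also have "\<dots> \<le> ennreal (1 + real k / real n)"
    using card_tuples_containing_le[OF n, of k v] n
    by (intro ennreal_leI) (simp add: sum_eq card_tuples field_simps)
  finally show ?thesis .
qed

lemma two_power_var_degree:
  "(2::real) ^ var_degree g v = prod_list (map (\<lambda>f. if v \<in> set (snd f) then 2 else 1) g)"
proof -
  have "var_degree g v = length (filter (\<lambda>f. v \<in> set (snd f)) g)"
    unfolding var_degree_def by (simp add: length_filter_conv_card)
  moreover have "(2::real) ^ length (filter (\<lambda>f. v \<in> set (snd f)) g)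
      = prod_list (map (\<lambda>f. if v \<in> set (snd f) then 2 else 1) g)"
    by (induction g) auto
  ultimately show ?thesis by simp
qed

lemma nn_integral_two_power_var_degree_le:
  assumes n: "n > 0" and d: "d > 0" and k: "k > 0"
  shows "(\<integral>\<^sup>+g. ennreal (2 ^ var_degree g v) \<partial>poisson_model d k \<rho> n) \<le> ennreal (exp d)"
proof -
  let ?f = "\<lambda>f. if v \<in> set (snd f) then 2 else 1 :: real"
  let ?r = "d * real n / real k" and ?c = "1 + real k / real n"
  have r: "?r > 0" using n d k by simp
  have "(\<integral>\<^sup>+g. ennreal (2 ^ var_degree g v) \<partial>poisson_model d k \<rho> n)
     = (\<integral>\<^sup>+m. (\<integral>\<^sup>+f. ennreal (?f f) \<partial>poisson_factor n k \<rho>) ^ m \<partial>poisson_pmf ?r)"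
    unfolding poisson_model_def two_power_var_degree
    by (simp add: nn_integral_replicate_pmf_prod_list)
  also have "\<dots> \<le> (\<integral>\<^sup>+m. ennreal (?c ^ m) \<partial>poisson_pmf ?r)"
  proof (intro nn_integral_mono)
    fix m
    have "(\<integral>\<^sup>+f. ennreal (?f f) \<partial>poisson_factor n k \<rho>) \<le> ennreal ?c"
      using nn_integral_poisson_factor_le[OF n] .
    then show "(\<integral>\<^sup>+f. ennreal (?f f) \<partial>poisson_factor n k \<rho>) ^ m \<le> ennreal (?c ^ m)"
      by (simp add: ennreal_power[symmetric] power_mono)
  qed
  also have "\<dots> = ennreal (exp (?r * (?c - 1)))"
    by (rule nn_integral_poisson_pmf_power[OF r]) simp
  also have "?r * (?c - 1) = d" using n k by (simp add: field_simps)
  finally show ?thesis .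
qed

lemma prob_var_degree_gt_le:
  assumes n: "n > 0" and d: "d > 0" and k: "k > 0"
  shows "measure_pmf.prob (poisson_model d k \<rho> n) {g. D < var_degree g v} \<le> exp d / 2 ^ D"
proof -
  let ?M = "poisson_model d k \<rho> n"
  have "emeasure ?M {g. D < var_degree g v} = (\<integral>\<^sup>+g. indicator {g. D < var_degree g v} g \<partial>?M)"
    by simp
  also have "\<dots> \<le> (\<integral>\<^sup>+g. ennreal (2 ^ var_degree g v) * ennreal (1 / 2 ^ D) \<partial>?M)"
  proof (intro nn_integral_mono)
    fix g
    have "D < var_degree g v \<Longrightarrow> (1::real) \<le> 2 ^ var_degree g v * (1 / 2 ^ D)"
      by (simp add: field_simps)
    then show "indicator {g. D < var_degree g v} g \<le> ennreal (2 ^ var_degree g v) * ennreal (1 / 2 ^ D)"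
      by (auto simp: ennreal_mult'[symmetric] split: split_indicator intro: ennreal_leI)
  qed
  also have "\<dots> = (\<integral>\<^sup>+g. ennreal (2 ^ var_degree g v) \<partial>?M) * ennreal (1 / 2 ^ D)"
    by (rule nn_integral_multc) simp
  also have "\<dots> \<le> ennreal (exp d) * ennreal (1 / 2 ^ D)"
    by (intro mult_right_mono nn_integral_two_power_var_degree_le[OF n d k]) simp
  also have "\<dots> = ennreal (exp d / 2 ^ D)"
    by (simp add: ennreal_mult'[symmetric])
  finally show ?thesis
    by (simp add: measure_pmf.emeasure_eq_measure ennreal_le_iff)
qed

lemma set_pmf_poisson_model:
  assumes n: "n > 0" and g: "g \<in> set_pmf (poisson_model d k \<rho> n)" and f: "(\<psi>, vs) \<in> set g"
  shows "\<psi> \<in> set_pmf \<rho>" and "vs \<in> tuples n k"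
proof -
  from g obtain m where "g \<in> set_pmf (replicate_pmf m (poisson_factor n k \<rho>))"
    unfolding poisson_model_def by auto
  then have "(\<psi>, vs) \<in> set_pmf (poisson_factor n k \<rho>)"
    using f by (auto simp: set_replicate_pmf)
  then show "\<psi> \<in> set_pmf \<rho>" and "vs \<in> tuples n k"
    unfolding poisson_factor_def tuples_def[symmetric]
    using tuples_nonempty[OF n] finite_tuples by auto
qed

lemma poisson_model_nonneg_weights:
  assumes n: "n > 0" and g: "g \<in> set_pmf (poisson_model d k \<rho> n)"
    and pos: "\<And>\<psi> \<tau>. \<psi> \<in> set_pmf \<rho> \<Longrightarrow> length \<tau> = k \<Longrightarrow> \<psi> \<tau> > 0"
  shows "nonneg_weights n (g :: 'o::finite fgraph)"
  using set_pmf_poisson_model[OF n g] pos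
  by (intro nonneg_weightsI) (fastforce simp: tuples_def intro: less_imp_le)

lemma poisson_model_arity:
  assumes "n > 0" "g \<in> set_pmf (poisson_model d k \<rho> n)" "a < length g"
  shows "length (snd (g ! a)) \<le> k"
  using set_pmf_poisson_model(2)[OF assms(1,2), of "fst (g ! a)" "snd (g ! a)"] assms(3)
  by (simp add: tuples_def)

lemma poisson_model_var_degree_eq_0:
  assumes "n > 0" "g \<in> set_pmf (poisson_model d k \<rho> n)" "n \<le> v"
  shows "var_degree g v = 0"
proof -
  have "v \<notin> set (snd (g ! a))" if "a < length g" for a
    using set_pmf_poisson_model(2)[OF assms(1,2), of "fst (g ! a)" "snd (g ! a)"] that assms(3)
    by (auto simp: tuples_def)
  then show ?thesis by (simp add: var_degree_def)
qed

lemma prob_some_var_degree_gt_two_log_le: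
  fixes \<rho> :: "('o list \<Rightarrow> real) pmf"
  assumes n: "n > 0" and d: "d > 0" and k: "k > 0"
  shows "measure_pmf.prob (poisson_model d k \<rho> n)
      (\<Union>v<n. {g. nat \<lceil>2 * log 2 (real n)\<rceil> < var_degree g v}) \<le> exp d / real n"
proof -
  let ?G = "poisson_model d k \<rho> n" and ?D = "nat \<lceil>2 * log 2 (real n)\<rceil>"
  have "exp d / 2 ^ ?D \<le> exp d / real n ^ 2"
    using ceiling_two_log_bounds(1)[OF n] n by (intro divide_left_mono) auto
  then have "measure_pmf.prob ?G {g. ?D < var_degree g v} \<le> exp d / real n ^ 2" for v
    using prob_var_degree_gt_le[OF n d k, of \<rho> ?D v] by linarith
  then have "measure_pmf.prob ?G (\<Union>v<n. {g. ?D < var_degree g v}) \<le> (\<Sum>v<n. exp d / real n ^ 2)"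
    by (intro order.trans[OF measure_UNION_le] sum_mono) auto
  then show ?thesis using n by (simp add: power2_eq_square)
qed

text \<open>Outside an event of probability O(1/n) all degrees are below 2 log n, which leaves
  O(n polylog n) pairs at bounded distance.\<close>

lemma poisson_model_expected_close_pairs_le:
  fixes \<rho> :: "('o list \<Rightarrow> real) pmf"
  assumes n: "n > 0" and d: "d > 0" and k: "k > 0"
  shows "measure_pmf.expectation (poisson_model d k \<rho> n) (close_pairs l n) / real n ^ 2
    \<le> real (l + 1) * ((real k + 2 + 2 * log 2 (real n)) ^ l / real n) + exp d / real n"
proof -
  let ?G = "poisson_model d k \<rho> n"
  define D where "D = nat \<lceil>2 * log 2 (real n)\<rceil>"
  define C where "C = real (l + 1) * (real k + real D + 1) ^ l"
  define bad :: "'o fgraph set" where "bad = (\<Union>v<n. {g. D < var_degree g v})"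
  have "measure_pmf.expectation ?G (close_pairs l n) \<le> real n * C + real n ^ 2 * measure_pmf.prob ?G bad"
  proof (rule expectation_le_on_good_event)
    fix g assume g: "g \<in> set_pmf ?G" and "g \<notin> bad"
    then have deg: "var_degree g v \<le> D" for v
      using poisson_model_var_degree_eq_0[OF n g] by (cases "v < n") (auto simp: bad_def not_less)
    show "close_pairs l n g \<le> real n * C"
      unfolding C_def by (rule close_pairs_le_bounded_degree[OF poisson_model_arity[OF n g] deg])
  qed (auto simp: C_def close_pairs_nonneg close_pairs_le_square)
  moreover have "measure_pmf.prob ?G bad \<le> exp d / real n"
    unfolding bad_def D_def by (rule prob_some_var_degree_gt_two_log_le[OF n d k])
  moreover have "C \<le> real (l + 1) * (real k + 2 + 2 * log 2 (real n)) ^ l"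
    unfolding C_def D_def using ceiling_two_log_bounds(2)[OF n]
    by (intro mult_left_mono power_mono) auto
  ultimately have "measure_pmf.expectation ?G (close_pairs l n)
      \<le> real n * (real (l + 1) * (real k + 2 + 2 * log 2 (real n)) ^ l) + real n ^ 2 * (exp d / real n)"
    by (smt (verit) mult_left_mono of_nat_0_le_iff zero_le_power2)
  then show ?thesis
    using n by (simp add: field_simps power2_eq_square)
qed

lemma poisson_model_close_pairs_tendsto_0:
  assumes d: "d > 0" and k: "k > 0"
  shows "(\<lambda>n. measure_pmf.expectation (poisson_model d k \<rho> n) (close_pairs l n) / real n ^ 2) \<longlonglongrightarrow> 0"
proof (rule real_tendsto_sandwich)
  show "eventually (\<lambda>n. 0 \<le> measure_pmf.expectation (poisson_model d k \<rho> n) (close_pairs l n) / real n ^ 2)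
    sequentially"
    by (intro always_eventually allI divide_nonneg_nonneg integral_nonneg_AE)
      (simp_all add: close_pairs_nonneg)
  show "eventually (\<lambda>n. measure_pmf.expectation (poisson_model d k \<rho> n) (close_pairs l n) / real n ^ 2
      \<le> real (l + 1) * ((real k + 2 + 2 * log 2 (real n)) ^ l / real n) + exp d / real n) sequentially"
    using eventually_gt_at_top[of 0]
    by eventually_elim (rule poisson_model_expected_close_pairs_le[OF _ d k])
  show "(\<lambda>n. real (l + 1) * ((real k + 2 + 2 * log 2 (real n)) ^ l / real n) + exp d / real n)
      \<longlonglongrightarrow> 0"
    using tendsto_add[OF tendsto_mult_right_zero[OF tendsto_log_power_over_n] lim_const_over_n]
    by simp
qed simp

section \<open>The percolated regular model\<close>

fun chunks :: "nat list \<Rightarrow> 'a list \<Rightarrow> 'a list list" where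
  "chunks [] w = []"
| "chunks (l # ls) w = take l w # chunks ls (drop l w)"

lemma length_chunks: "length (chunks ls w) = length ls"
  by (induction ls arbitrary: w) auto

lemma length_nth_chunks:
  "sum_list ls \<le> length w \<Longrightarrow> i < length ls \<Longrightarrow> length (chunks ls w ! i) = ls ! i"
proof (induction ls arbitrary: w i)
  case (Cons l ls)
  then show ?case by (cases i) auto
qed simp

lemma set_nth_chunks_subset: "i < length ls \<Longrightarrow> set (chunks ls w ! i) \<subseteq> set w"
proof (induction ls arbitrary: w i)
  case (Cons l ls)
  then show ?case by (cases i) (auto dest: in_set_takeD in_set_dropD)
qed simp

lemma concat_chunks: "concat (chunks ls w) = take (sum_list ls) w"
  by (induction ls arbitrary: w) (auto simp: take_add)

lemma count_div_le:
  assumes "D > (0::nat)"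
  shows "length (filter (\<lambda>u. u = v) (map (\<lambda>p. p div D) [0..<S])) \<le> D"
proof -
  have "length (filter (\<lambda>u. u = v) (map (\<lambda>p. p div D) [0..<S])) = card {p. p < S \<and> p div D = v}"
    by (simp add: length_filter_conv_card) (rule arg_cong[where f=card], auto)
  also have "\<dots> \<le> card {v * D..<v * D + D}"
  proof (rule card_mono)
    show "{p. p < S \<and> p div D = v} \<subseteq> {v * D..<v * D + D}"
    proof
      fix p assume "p \<in> {p. p < S \<and> p div D = v}"
      then have "p = v * D + p mod D" using div_mult_mod_eq[of p D] by simp
      moreover have "p mod D < D" using assms by simp
      ultimately show "p \<in> {v * D..<v * D + D}"
        by (simp only: atLeastLessThan_iff) linarith
    qed
  qed simp
  finally show ?thesis by simp
qed

text \<open>Listing the slots 0, 1, ... and sending slot p to variable p div D fills every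
  variable at most D times, so the regular tuples exist as long as there are at most D n slots.\<close>

lemma reg_tuples_nonempty:
  assumes D: "D > 0" and slots: "sum_list ls \<le> D * n"
  shows "reg_tuples (real D) n ls \<noteq> {}"
proof -
  define w where "w = map (\<lambda>p. p div D) [0..<sum_list ls]"
  have len_w: "length w = sum_list ls" by (simp add: w_def)
  have set_w: "set w \<subseteq> {..<n}"
  proof
    fix u assume "u \<in> set w"
    then obtain p where p: "p < sum_list ls" "u = p div D" by (auto simp: w_def)
    then have "p < n * D" using slots by (simp only: mult.commute[of n D])
    then show "u \<in> {..<n}" using p D by (simp add: div_less_iff_less_mult)
  qed
  have "chunks ls w \<in> reg_tuples (real D) n ls"
    unfolding reg_tuples_def
  proof (intro CollectI conjI allI impI)
    fix i assume i: "i < length ls"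
    show "length (chunks ls w ! i) = ls ! i"
      using length_nth_chunks[OF _ i, of w] by (simp add: len_w)
    show "set (chunks ls w ! i) \<subseteq> {..<n}"
      using set_nth_chunks_subset[OF i, of w] set_w by (rule order.trans)
  next
    fix v
    have "take (sum_list ls) w = w" by (simp add: len_w)
    then have "degree (chunks ls w) v = length (filter (\<lambda>u. u = v) w)"
      by (simp add: degree_def concat_chunks)
    also have "\<dots> \<le> D" unfolding w_def by (rule count_div_le[OF D])
    finally show "real (degree (chunks ls w) v) \<le> real D" by simp
  qed (rule length_chunks)
  then show ?thesis by blast
qed

lemma finite_reg_tuples: "finite (reg_tuples d n ls)"
proof -
  let ?B = "{vs. set vs \<subseteq> {..<n} \<and> length vs \<le> sum_list ls}"
  have "reg_tuples d n ls \<subseteq> {vss. set vss \<subseteq> ?B \<and> length vss = length ls}"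
  proof
    fix vss assume "vss \<in> reg_tuples d n ls"
    then have len: "length vss = length ls"
      and nth: "\<And>i. i < length ls \<Longrightarrow> length (vss ! i) = ls ! i \<and> set (vss ! i) \<subseteq> {..<n}"
      by (auto simp: reg_tuples_def)
    have "set vss \<subseteq> ?B"
    proof
      fix vs assume "vs \<in> set vss"
      then obtain i where i: "i < length vss" "vs = vss ! i" by (auto simp: in_set_conv_nth)
      then show "vs \<in> ?B" using nth[of i] len elem_le_sum_list[of i ls] by auto
    qed
    then show "vss \<in> {vss. set vss \<subseteq> ?B \<and> length vss = length ls}"
      using len by simp
  qed
  moreover have "finite {vss. set vss \<subseteq> ?B \<and> length vss = length ls}"
    by (intro finite_lists_length_eq finite_lists_length_le) simp
  ultimately show ?thesis by (rule finite_subset)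
qed

lemma length_filter_mem_le_degree: "length (filter (\<lambda>vs. v \<in> set vs) vss) \<le> degree vss v"
proof (induction vss)
  case (Cons vs vss)
  have "length (filter (\<lambda>vs. v \<in> set vs) (vs # vss))
      \<le> length (filter (\<lambda>u. u = v) vs) + degree vss v"
  proof (cases "v \<in> set vs")
    case True
    then have "filter (\<lambda>u. u = v) vs \<noteq> []" by (simp add: filter_empty_conv)
    then have "0 < length (filter (\<lambda>u. u = v) vs)" by simp
    moreover have "length (filter (\<lambda>vs. v \<in> set vs) (vs # vss))
        = Suc (length (filter (\<lambda>vs. v \<in> set vs) vss))"
      using True by simp
    ultimately show ?thesis using Cons.IH by linarith
  qed (use Cons in simp)
  then show ?case by (simp add: degree_def)
qed (simp add: degree_def)

lemma restrict_wt_nonneg: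
  assumes "\<And>\<tau>. length \<tau> = k \<Longrightarrow> \<psi> \<tau> > 0"
  shows "restrict_wt k \<psi> J ys \<ge> 0"
  unfolding restrict_wt_def using assms
  by (intro divide_nonneg_nonneg sum_nonneg) (auto intro: less_imp_le)

lemma set_pmf_perc_reg_model:
  fixes \<rho> :: "('o::finite list \<Rightarrow> real) pmf"
  assumes n: "n > 0" and D: "D > 0" and k: "k > 0"
    and g: "g \<in> set_pmf (perc_reg_model (real D) \<epsilon> k \<rho> n)"
  obtains js vss where "set js \<subseteq> Pow {..<k} \<times> set_pmf \<rho>"
    and "vss \<in> reg_tuples (real D) n (map (\<lambda>(J, _). card J) js)"
    and "g = map2 (\<lambda>(J, \<psi>) vs. (restrict_wt k \<psi> J, vs)) js vss"
proof -
  define P where "P = do { m \<leftarrow> poisson_pmf (real D * real n / real k);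
                           replicate_pmf m (perc_data \<epsilon> k \<rho>) }"
  define S where "S = {js :: (nat set \<times> ('o list \<Rightarrow> real)) list.
    real (sum_list (map (\<lambda>(J, _). card J) js)) \<le> real D * real n}"
  have "(0::nat) \<in> set_pmf (poisson_pmf (real D * real n / real k))"
    using n D k by (simp add: set_pmf_poisson)
  moreover have "[] \<in> set_pmf (replicate_pmf 0 (perc_data \<epsilon> k \<rho>))" by simp
  ultimately have "[] \<in> set_pmf P \<inter> S"
    unfolding P_def S_def by (auto simp del: replicate_pmf.simps)
  then have nonempty: "set_pmf P \<inter> S \<noteq> {}" by blast
  from g obtain js where js: "js \<in> set_pmf (cond_pmf P S)"
    and g': "g \<in> set_pmf (pmf_of_set (reg_tuples (real D) n (map (\<lambda>(J, _). card J) js)) \<bind>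
          (\<lambda>vss. return_pmf (map2 (\<lambda>(J, \<psi>) vs. (restrict_wt k \<psi> J, vs)) js vss)))"
    unfolding perc_reg_model_def P_def S_def by auto
  from js have "js \<in> set_pmf P" and "js \<in> S" using set_cond_pmf[OF nonempty] by auto
  from \<open>js \<in> set_pmf P\<close> obtain m where "js \<in> set_pmf (replicate_pmf m (perc_data \<epsilon> k \<rho>))"
    unfolding P_def by auto
  then have "set js \<subseteq> set_pmf (perc_data \<epsilon> k \<rho>)" by (auto simp: set_replicate_pmf)
  then have js_data: "set js \<subseteq> Pow {..<k} \<times> set_pmf \<rho>"
    unfolding perc_data_def by auto
  from \<open>js \<in> S\<close> have "sum_list (map (\<lambda>(J, _). card J) js) \<le> D * n"
    unfolding S_def by (simp flip: of_nat_mult)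
  then have "reg_tuples (real D) n (map (\<lambda>(J, _). card J) js) \<noteq> {}"
    by (rule reg_tuples_nonempty[OF D])
  with g' obtain vss where "vss \<in> reg_tuples (real D) n (map (\<lambda>(J, _). card J) js)"
    and "g = map2 (\<lambda>(J, \<psi>) vs. (restrict_wt k \<psi> J, vs)) js vss"
    using finite_reg_tuples by auto
  with js_data show ?thesis by (rule that)
qed

context
  fixes \<rho> :: "('o::finite list \<Rightarrow> real) pmf" and D k n :: nat
  assumes n: "n > 0" and D: "D > 0" and k: "k > 0"
begin

lemma perc_reg_model_arity:
  assumes g: "g \<in> set_pmf (perc_reg_model (real D) \<epsilon> k \<rho> n)" and a: "a < length g"
  shows "length (snd (g ! a)) \<le> k"
proof -
  obtain js vss where js: "set js \<subseteq> Pow {..<k} \<times> set_pmf \<rho>"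
    and vss: "vss \<in> reg_tuples (real D) n (map (\<lambda>(J, _). card J) js)"
    and g_eq: "g = map2 (\<lambda>(J, \<psi>) vs. (restrict_wt k \<psi> J, vs)) js vss"
    by (rule set_pmf_perc_reg_model[OF n D k g])
  have a': "a < length js" "length vss = length js" using a vss g_eq by (auto simp: reg_tuples_def)
  obtain J \<psi> where J: "js ! a = (J, \<psi>)" by fastforce
  then have "J \<subseteq> {..<k}" using js nth_mem[OF a'(1)] by auto
  then have "card J \<le> k" using card_mono[of "{..<k}" J] by simp
  moreover have "length (vss ! a) = card J" using vss a' J by (auto simp: reg_tuples_def)
  ultimately show ?thesis using g_eq a' J by simp
qed

lemma perc_reg_model_var_degree_le:
  assumes g: "g \<in> set_pmf (perc_reg_model (real D) \<epsilon> k \<rho> n)"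
  shows "var_degree g v \<le> D"
proof -
  obtain js vss where "set js \<subseteq> Pow {..<k} \<times> set_pmf \<rho>"
    and vss: "vss \<in> reg_tuples (real D) n (map (\<lambda>(J, _). card J) js)"
    and g_eq: "g = map2 (\<lambda>(J, \<psi>) vs. (restrict_wt k \<psi> J, vs)) js vss"
    by (rule set_pmf_perc_reg_model[OF n D k g])
  have len: "length vss = length js" "length g = length js"
    using vss g_eq by (auto simp: reg_tuples_def)
  have snd_g: "snd (g ! a) = vss ! a" if "a < length g" for a
    using that len g_eq by (auto split: prod.splits)
  show ?thesis
  proof (cases "v < n")
    case True
    have "{a. a < length g \<and> v \<in> set (snd (g ! a))} = {a. a < length vss \<and> v \<in> set (vss ! a)}"
      using snd_g len by auto
    then have "var_degree g v = length (filter (\<lambda>vs. v \<in> set vs) vss)"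
      by (simp add: var_degree_def length_filter_conv_card)
    also have "\<dots> \<le> degree vss v" by (rule length_filter_mem_le_degree)
    also have "real (degree vss v) \<le> real D" using vss True by (simp add: reg_tuples_def)
    finally show ?thesis by simp
  next
    case False
    have "set (vss ! a) \<subseteq> {..<n}" if "a < length js" for a
      using vss that by (simp add: reg_tuples_def)
    then have "v \<notin> set (snd (g ! a))" if "a < length g" for a
      using that snd_g[OF that] len False by auto
    then have "{a. a < length g \<and> v \<in> set (snd (g ! a))} = {}" by blast
    then show ?thesis by (metis card.empty var_degree_def zero_le)
  qed
qed

lemma perc_reg_model_nonneg_weights:
  assumes g: "g \<in> set_pmf (perc_reg_model (real D) \<epsilon> k \<rho> n)"
    and pos: "\<And>\<psi> \<tau>. \<psi> \<in> set_pmf \<rho> \<Longrightarrow> length \<tau> = k \<Longrightarrow> \<psi> \<tau> > 0"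
  shows "nonneg_weights n g"
proof (rule nonneg_weightsI)
  obtain js vss where js: "set js \<subseteq> Pow {..<k} \<times> set_pmf \<rho>"
    and "vss \<in> reg_tuples (real D) n (map (\<lambda>(J, _). card J) js)"
    and g_eq: "g = map2 (\<lambda>(J, \<psi>) vs. (restrict_wt k \<psi> J, vs)) js vss"
    by (rule set_pmf_perc_reg_model[OF n D k g])
  fix \<phi> vs \<tau> assume "(\<phi>, vs) \<in> set g"
  then obtain J \<psi> where "((J, \<psi>), vs) \<in> set (zip js vss)" and \<phi>: "\<phi> = restrict_wt k \<psi> J"
    unfolding g_eq by fastforce
  then have "\<psi> \<in> set_pmf \<rho>" using js by (auto dest: set_zip_leftD)
  then show "\<phi> \<tau> \<ge> 0" unfolding \<phi> by (intro restrict_wt_nonneg pos)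
qed

lemma perc_reg_model_expected_close_pairs_le:
  "measure_pmf.expectation (perc_reg_model (real D) \<epsilon> k \<rho> n) (close_pairs l n) / real n ^ 2
    \<le> real (l + 1) * (real k + real D + 1) ^ l / real n"
proof -
  let ?C = "real (l + 1) * (real k + real D + 1) ^ l"
  have "measure_pmf.expectation (perc_reg_model (real D) \<epsilon> k \<rho> n) (close_pairs l n)
      \<le> measure_pmf.expectation (perc_reg_model (real D) \<epsilon> k \<rho> n) (\<lambda>_. real n * ?C)"
  proof (rule integral_mono_AE)
    show "integrable (perc_reg_model (real D) \<epsilon> k \<rho> n) (close_pairs l n)"
      by (intro integrable_measure_pmf_bounded[where B="real n ^ 2"])
        (simp add: abs_of_nonneg close_pairs_nonneg close_pairs_le_square)
    show "AE g in perc_reg_model (real D) \<epsilon> k \<rho> n. close_pairs l n g \<le> real n * ?C"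
      unfolding AE_measure_pmf_iff
    proof
      fix g assume g: "g \<in> set_pmf (perc_reg_model (real D) \<epsilon> k \<rho> n)"
      show "close_pairs l n g \<le> real n * ?C"
        by (rule close_pairs_le_bounded_degree[OF perc_reg_model_arity[OF g]
              perc_reg_model_var_degree_le[OF g]])
    qed
  qed simp
  then show ?thesis
    using n by (simp add: measure_pmf.prob_space field_simps power2_eq_square)
qed

end

lemma perc_reg_model_close_pairs_tendsto_0:
  fixes \<rho> :: "('o::finite list \<Rightarrow> real) pmf"
  assumes D: "D > 0" and k: "k > 0"
  shows "(\<lambda>n. measure_pmf.expectation (perc_reg_model (real D) \<epsilon> k \<rho> n) (close_pairs l n) / real n ^ 2)
    \<longlonglongrightarrow> 0"
proof (rule real_tendsto_sandwich)
  show "eventually (\<lambda>n. 0 \<le> measure_pmf.expectation (perc_reg_model (real D) \<epsilon> k \<rho> n) (close_pairs l n)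
      / real n ^ 2) sequentially"
    by (intro always_eventually allI divide_nonneg_nonneg integral_nonneg_AE)
      (simp_all add: close_pairs_nonneg)
  show "eventually (\<lambda>n. measure_pmf.expectation (perc_reg_model (real D) \<epsilon> k \<rho> n) (close_pairs l n)
      / real n ^ 2 \<le> real (l + 1) * (real k + real D + 1) ^ l / real n) sequentially"
    using eventually_gt_at_top[of 0]
    by eventually_elim (rule perc_reg_model_expected_close_pairs_le[OF _ D k])
qed (simp_all add: lim_const_over_n)

theorem lemma6:
  fixes d \<epsilon> :: real and k :: nat
    and \<Psi> :: "('o::finite list \<Rightarrow> real) set"
    and \<rho> :: "('o list \<Rightarrow> real) pmf"
    and G :: "nat \<Rightarrow> 'o fgraph pmf"
  assumes d_pos: "d > 0"
    and k: "k \<ge> 3"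
    and Psi_fin: "finite \<Psi>" and Psi_ne: "\<Psi> \<noteq> {}"
    and Psi_pos: "\<And>\<psi> \<tau>. \<psi> \<in> \<Psi> \<Longrightarrow> length \<tau> = k \<Longrightarrow> \<psi> \<tau> > 0"
    and rho: "set_pmf \<rho> \<subseteq> \<Psi>"
    and model: "G = poisson_model d k \<rho>
              \<or> (d \<in> \<nat> \<and> 0 < \<epsilon> \<and> \<epsilon> \<le> 1 \<and> G = perc_reg_model d \<epsilon> k \<rho>)"
    and hyp: "(\<lambda>l. limsup (\<lambda>n. ereal (
                 (1 / real n) * (\<Sum>i<n. \<Sum>\<sigma>\<in>configs n.
                   measure_pmf.expectation (G n) (\<lambda>g.
                     gibbs n g \<sigma> * tv_dist (marg1 n g i) (cond_marg1 n g i (nabla n g l i \<sigma>)))))))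
              \<longlonglongrightarrow> 0"
  shows "(\<lambda>n. (1 / real n ^ 2) * (\<Sum>i<n. \<Sum>j<n.
            measure_pmf.expectation (G n) (\<lambda>g.
              tv_dist (marg2 n g i j) (\<lambda>(\<omega>, \<omega>'). marg1 n g i \<omega> * marg1 n g j \<omega>'))))
         \<longlonglongrightarrow> 0"
proof -
  have k0: "k > 0" using k by simp
  have pos: "\<And>\<psi> \<tau>. \<psi> \<in> set_pmf \<rho> \<Longrightarrow> length \<tau> = k \<Longrightarrow> \<psi> \<tau> > 0"
    using Psi_pos rho by blast
  from model consider (poisson) "G = poisson_model d k \<rho>"
    | (regular) D where "d = real D" "D > 0" "G = perc_reg_model (real D) \<epsilon> k \<rho>"
    using d_pos by (auto elim: Nats_cases)
  then have "(\<lambda>n. (1 / real n ^ 2) *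
      (\<Sum>i<n. \<Sum>j<n. measure_pmf.expectation (G n) (\<lambda>g. pair_dependence n g i j))) \<longlonglongrightarrow> 0"
  proof cases
    case poisson
    show ?thesis
      using poisson_model_close_pairs_tendsto_0[OF d_pos k0]
      by (intro pair_dependence_tendsto_0[OF _ _ hyp])
        (simp_all add: poisson poisson_model_nonneg_weights pos)
  next
    case regular
    show ?thesis
      using perc_reg_model_close_pairs_tendsto_0[OF \<open>D > 0\<close> k0]
      by (intro pair_dependence_tendsto_0[OF _ _ hyp])
        (auto simp: regular intro: perc_reg_model_nonneg_weights[OF _ \<open>D > 0\<close> k0] pos)
  qed
  then show ?thesis unfolding pair_dependence_def .
qed

end
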